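(* Let $W \subseteq \mathbb{Z}$. Then $W$ is a minimal additive complement to itself if and only if $W + W = \mathbb{Z}$ and $W$ contains no 3-term arithmetic progression.
   Context: For $X, Y \subseteq \mathbb{Z}$, $X + Y = \{x + y : x \in X, y \in Y\}$. A set $C \subseteq \mathbb{Z}$ is an additive complement to $W \subseteq \mathbb{Z}$ if $C + W = \mathbb{Z}$; it is a minimal additive complement to $W$ if moreover no proper subset of $C$ is an additive complement to $W$. A 3-term arithmetic progression in $W$ is a triple $w - d, w, w + d$ of elements of $W$ with $d \neq 0$. *)

theory Defs
  imports Main
begin

definition sumset :: "int set \<Rightarrow> int set \<Rightarrow> int set" where
  "sumset X Y = {x + y | x y. x \<in> X \<and> y \<in> Y}"

definition add_complement :: "int set \<Rightarrow> int set \<Rightarrow> bool" where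
  "add_complement C W \<longleftrightarrow> sumset C W = UNIV"

definition minimal_add_complement :: "int set \<Rightarrow> int set \<Rightarrow> bool" where
  "minimal_add_complement C W \<longleftrightarrow>
     add_complement C W \<and> (\<forall>C'. C' \<subset> C \<longrightarrow> \<not> add_complement C' W)"

definition has_3AP :: "int set \<Rightarrow> bool" where
  "has_3AP W \<longleftrightarrow> (\<exists>w d. d \<noteq> 0 \<and> w - d \<in> W \<and> w \<in> W \<and> w + d \<in> W)"

end

theory Submission
  imports Defs
begin

text \<open>If \<open>w - d, w, w + d \<in> W\<close>, then \<open>w\<close> is redundant in \<open>W + W\<close>: the sum \<open>w + w\<close>
  is also \<open>(w - d) + (w + d)\<close>, and every other sum involving \<open>w\<close> can use \<open>w\<close> as the
  second summand. Conversely, if a proper subset \<open>C\<close> of \<open>W\<close> still satisfies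
  \<open>C + W = \<int>\<close>, pick \<open>w \<in> W - C\<close> and write \<open>2w = c + v\<close> with \<open>c \<in> C\<close>, \<open>v \<in> W\<close>;
  then \<open>c, w, v\<close> is a 3-term progression.\<close>

lemma sumset_Diff_midpoint:
  assumes "d \<noteq> 0" "w - d \<in> W" "w + d \<in> W"
  shows "sumset (W - {w}) W = sumset W W"
proof
  show "sumset W W \<subseteq> sumset (W - {w}) W"
  proof
    fix n assume "n \<in> sumset W W"
    then obtain a b where ab: "n = a + b" "a \<in> W" "b \<in> W" unfolding sumset_def by blast
    consider "a \<noteq> w" | "a = w" "b \<noteq> w" | "a = w" "b = w" by blast
    then show "n \<in> sumset (W - {w}) W"
    proof cases
      case 1 with ab show ?thesis unfolding sumset_def by blast
    next
      case 2
      with ab have "n = b + a" "b \<in> W - {w}" "a \<in> W" by auto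
      then show ?thesis unfolding sumset_def by blast
    next
      case 3
      with ab have "n = (w - d) + (w + d)" by simp
      moreover have "w - d \<in> W - {w}" using assms by simp
      ultimately show ?thesis using assms(3) unfolding sumset_def by blast
    qed
  qed
qed (auto simp: sumset_def)

lemma has_3AP_if_double_in_sumset:
  assumes "C \<subseteq> W" "w \<in> W" "w \<notin> C" "2 * w \<in> sumset C W"
  shows "has_3AP W"
proof -
  obtain c v where cv: "2 * w = c + v" "c \<in> C" "v \<in> W"
    using assms(4) unfolding sumset_def by blast
  have "c \<noteq> w" using cv assms(3) by blast
  moreover have "w - (w - c) \<in> W" "w + (w - c) \<in> W"
    using cv assms(1) by (auto simp: algebra_simps)
  ultimately show ?thesis
    unfolding has_3AP_def using assms(2) by (intro exI[of _ w] exI[of _ "w - c"]) auto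
qed

theorem theorem10:
  fixes W :: "int set"
  shows "minimal_add_complement W W \<longleftrightarrow> (sumset W W = UNIV \<and> \<not> has_3AP W)"
proof
  assume min: "minimal_add_complement W W"
  then have full: "sumset W W = UNIV"
    by (simp add: minimal_add_complement_def add_complement_def)
  have "\<not> has_3AP W"
  proof
    assume "has_3AP W"
    then obtain w d where "d \<noteq> 0" "w - d \<in> W" "w \<in> W" "w + d \<in> W"
      unfolding has_3AP_def by blast
    with full have "W - {w} \<subset> W" "add_complement (W - {w}) W"
      by (auto simp: add_complement_def sumset_Diff_midpoint)
    with min show False unfolding minimal_add_complement_def by blast
  qed
  with full show "sumset W W = UNIV \<and> \<not> has_3AP W" ..
next
  assume full_no3AP: "sumset W W = UNIV \<and> \<not> has_3AP W"
  have "\<not> add_complement C W" if "C \<subset> W" for C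
  proof
    assume "add_complement C W"
    moreover obtain w where "w \<in> W" "w \<notin> C" using \<open>C \<subset> W\<close> by blast
    ultimately have "has_3AP W"
      using \<open>C \<subset> W\<close> by (intro has_3AP_if_double_in_sumset) (auto simp: add_complement_def)
    with full_no3AP show False by simp
  qed
  with full_no3AP show "minimal_add_complement W W"
    by (simp add: minimal_add_complement_def add_complement_def)
qed

end
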